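(* Let $\mathcal{V}$ and $\mathcal{Q}$ be real Hilbert spaces, let $A:\mathcal{V}\times\mathcal{V}\to\mathbb{R}$ and $B:\mathcal{V}\times\mathcal{Q}\to\mathbb{R}$ be bounded bilinear forms, and let $\mathcal{V}_h\subset\mathcal{V}$, $\mathcal{Q}_h\subset\mathcal{Q}$ be finite-dimensional subspaces for which the discrete Babuška–Brezzi conditions hold (so that the discrete saddle point problems below are uniquely solvable for all right-hand sides, and the problem $A(w_h,v_h)=\ell(v_h)$ for all $v_h\in\ker\mathcal{B}_h$, $w_h\in\ker\mathcal{B}_h$, is uniquely solvable for every linear functional $\ell$ on $\ker\mathcal{B}_h$). Let $F\in\mathcal{V}'$, $G\in\mathcal{Q}'$. Let $(u_h,p_h)\in\mathcal{V}_h\times\mathcal{Q}_h$ satisfy $$A(u_h,v_h)+B(v_h,p_h)=F(v_h)\ \ \forall v_h\in\mathcal{V}_h,\qquad B(u_h,q_h)=G(q_h)\ \ \forall q_h\in\mathcal{Q}_h,$$ and for $r\in\mathcal{Q}$ let $(u_{h,r},p_{h,r})\in\mathcal{V}_h\times\mathcal{Q}_h$ satisfy $$A(u_{h,r},v_h)+B(v_h,p_{h,r})=F(v_h)+B(v_h,r)\ \ \forall v_h\in\mathcal{V}_h,\qquad B(u_{h,r},q_h)=G(q_h)\ \ \forall q_h\in\mathcal{Q}_h.$$ Then $$u_{h,r}=u_h\ \text{ for all } r\in\mathcal{Q}\quad\Longleftrightarrow\quad \ker\mathcal{B}_h\subseteq\ker\mathcal{B}.$$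
   Context: $\ker\mathcal{B}:=\{v\in\mathcal{V}: B(v,q)=0\ \forall q\in\mathcal{Q}\}$ and $\ker\mathcal{B}_h:=\{v_h\in\mathcal{V}_h: B(v_h,q_h)=0\ \forall q_h\in\mathcal{Q}_h\}$. The discrete Babuška–Brezzi conditions include the discrete inf-sup condition $\beta_h:=\inf_{q_h\in\mathcal{Q}_h}\sup_{v_h\in\mathcal{V}_h} B(v_h,q_h)/(\|v_h\|_{\mathcal{V}}\|q_h\|_{\mathcal{Q}})>0$ and an invertibility (coercivity/inf-sup) condition for $A$ on $\ker\mathcal{B}_h$. *)

theory Defs
  imports "HOL-Analysis.Analysis"
begin

definition ker_form :: "('v \<Rightarrow> 'q \<Rightarrow> real) \<Rightarrow> 'v set \<Rightarrow> 'q set \<Rightarrow> 'v set" where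
  "ker_form b X Y = {x \<in> X. \<forall>y\<in>Y. b x y = 0}"

definition fin_dim_subspace :: "'a::real_vector set \<Rightarrow> bool" where
  "fin_dim_subspace S \<longleftrightarrow> (\<exists>B. finite B \<and> S = span B)"

text \<open>Discrete inf-sup condition for b on X x Y (X, Y finite-dimensional, so the sup is
  attained):  exists beta > 0 such that for every nonzero y in Y,
  sup over nonzero x in X of  b x y / (norm x)  is at least  beta * norm y.\<close>
definition inf_sup :: "('v::real_normed_vector \<Rightarrow> 'q::real_normed_vector \<Rightarrow> real)
    \<Rightarrow> 'v set \<Rightarrow> 'q set \<Rightarrow> bool" where
  "inf_sup b X Y \<longleftrightarrow> (\<exists>\<beta>>0. \<forall>y\<in>Y - {0}. \<exists>x\<in>X - {0}. \<beta> * norm x * norm y \<le> b x y)"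

end

theory Submission
  imports Defs
begin

text \<open>Subtracting the two discrete saddle point problems and testing with the discrete kernel
  \<open>K = ker_form B Vh Qh\<close> removes both pressures, so \<open>d = u\<^sub>h\<^sub>,\<^sub>r - u\<^sub>h \<in> K\<close> solves
  \<open>A d v = B v r\<close> for all \<open>v \<in> K\<close>. If \<open>K\<close> lies in the continuous kernel the right-hand side
  vanishes and the inf-sup condition for \<open>A\<close> on \<open>K\<close> forces \<open>d = 0\<close>; conversely \<open>d = 0\<close>
  for every \<open>r\<close> says that every \<open>v \<in> K\<close> annihilates all of \<open>Q\<close>.\<close>

lemma fin_dim_subspace_imp_subspace: "fin_dim_subspace S \<Longrightarrow> subspace S"
  unfolding fin_dim_subspace_def by (auto intro: subspace_span)

lemma ker_form_UNIV_iff: "x \<in> ker_form b UNIV UNIV \<longleftrightarrow> (\<forall>y. b x y = 0)"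
  by (simp add: ker_form_def)

lemma inf_sup_nondegenerate:
  assumes "inf_sup b X Y" and "y \<in> Y" and "\<forall>x\<in>X. b x y = 0"
  shows "y = 0"
proof (rule ccontr)
  assume "y \<noteq> 0"
  obtain \<beta> where "\<beta> > 0" and \<beta>: "\<forall>y\<in>Y - {0}. \<exists>x\<in>X - {0}. \<beta> * norm x * norm y \<le> b x y"
    using assms(1) unfolding inf_sup_def by blast
  then obtain x where "x \<in> X" "x \<noteq> 0" and "\<beta> * norm x * norm y \<le> b x y"
    using \<open>y \<in> Y\<close> \<open>y \<noteq> 0\<close> by blast
  moreover have "\<beta> * norm x * norm y > 0"
    using \<open>\<beta> > 0\<close> \<open>x \<noteq> 0\<close> \<open>y \<noteq> 0\<close> by simp
  ultimately show False
    using assms(3) by fastforce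
qed

lemma diff_in_ker_form:
  assumes "bounded_bilinear b" and "subspace X"
    and "x \<in> X" and "x' \<in> X" and "\<forall>y\<in>Y. b x y = b x' y"
  shows "x - x' \<in> ker_form b X Y"
  using assms by (simp add: ker_form_def subspace_diff bounded_bilinear.diff_left)

lemma saddle_point_shift_on_ker_form:
  assumes A: "bounded_bilinear A" and B: "bounded_bilinear B" and "subspace Qh"
    and "p \<in> Qh" and "p' \<in> Qh"
    and eq: "\<forall>v\<in>Vh. A u v + B v p = F v"
    and eq': "\<forall>v\<in>Vh. A u' v + B v p' = F v + B v r"
    and v: "v \<in> ker_form B Vh Qh"
  shows "A (u' - u) v = B v r"
proof -
  have "v \<in> Vh" and "B v (p' - p) = 0"
    using v \<open>subspace Qh\<close> \<open>p \<in> Qh\<close> \<open>p' \<in> Qh\<close> by (auto simp: ker_form_def subspace_diff)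
  then have "B v p' = B v p"
    by (simp add: bounded_bilinear.diff_right[OF B])
  with \<open>v \<in> Vh\<close> eq eq' show ?thesis
    by (fastforce simp: bounded_bilinear.diff_left[OF A])
qed

theorem lemma4p2:
  fixes A :: "'v::{real_inner,complete_space} \<Rightarrow> 'v \<Rightarrow> real"
    and B :: "'v \<Rightarrow> 'q::{real_inner,complete_space} \<Rightarrow> real"
    and Vh :: "'v set" and Qh :: "'q set"
    and F :: "'v \<Rightarrow> real" and G :: "'q \<Rightarrow> real"
    and uh :: 'v and ph :: 'q
    and uhr :: "'q \<Rightarrow> 'v" and phr :: "'q \<Rightarrow> 'q"
  assumes A_bdd: "bounded_bilinear A"
    and B_bdd: "bounded_bilinear B"
    and Vh: "fin_dim_subspace Vh" and Qh: "fin_dim_subspace Qh"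
    and BB_B: "inf_sup (\<lambda>v q. B v q) Vh Qh"
    and BB_A: "inf_sup (\<lambda>v w. A w v) (ker_form B Vh Qh) (ker_form B Vh Qh)"
    and F: "bounded_linear F" and G: "bounded_linear G"
    and uh_in: "uh \<in> Vh" and ph_in: "ph \<in> Qh"
    and eq1: "\<forall>v\<in>Vh. A uh v + B v ph = F v"
    and eq2: "\<forall>q\<in>Qh. B uh q = G q"
    and uhr_in: "\<forall>r. uhr r \<in> Vh" and phr_in: "\<forall>r. phr r \<in> Qh"
    and eqr1: "\<forall>r. \<forall>v\<in>Vh. A (uhr r) v + B v (phr r) = F v + B v r"
    and eqr2: "\<forall>r. \<forall>q\<in>Qh. B (uhr r) q = G q"
  shows "(\<forall>r. uhr r = uh) \<longleftrightarrow> ker_form B Vh Qh \<subseteq> ker_form B UNIV UNIV"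
proof -
  let ?K = "ker_form B Vh Qh"
  have diff_in_K: "uhr r - uh \<in> ?K" for r
    using diff_in_ker_form[OF B_bdd fin_dim_subspace_imp_subspace[OF Vh]] uhr_in uh_in eqr2 eq2
    by simp
  have shift: "A (uhr r - uh) v = B v r" if "v \<in> ?K" for r v
    using saddle_point_shift_on_ker_form[OF A_bdd B_bdd fin_dim_subspace_imp_subspace[OF Qh]
        ph_in spec[OF phr_in] eq1 spec[OF eqr1] that] .
  show ?thesis
  proof
    assume "\<forall>r. uhr r = uh"
    then show "?K \<subseteq> ker_form B UNIV UNIV"
      using shift by (auto simp: ker_form_UNIV_iff bounded_bilinear.zero_left[OF A_bdd])
  next
    assume "?K \<subseteq> ker_form B UNIV UNIV"
    then have "\<forall>v\<in>?K. A (uhr r - uh) v = 0" for r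
      using shift by (auto simp: ker_form_UNIV_iff)
    then show "\<forall>r. uhr r = uh"
      using inf_sup_nondegenerate[OF BB_A diff_in_K] by simp
  qed
qed

end
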